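(* Let $H \le K \le G$ be finite groups and let $U$ be an irreducible complex representation of $K$ with $U^H \ne 0$. Let $W = \mathrm{Ind}_K^G(U)$ (with $U$ identified with the summand $eU \subseteq W$), and let $V$ be an irreducible $G$-subrepresentation of $W$ (regarded also as a $K$-representation by restriction). Then: (1) $G_{(W^H)} \subseteq K_{(U^H)}$; (2) $V^H \ne 0$ and $K_{(V^H)} \subseteq K_{(U^H)}$; (3) if $K_{(U^H)} = H$, then $G_{(W^H)} = K_{(V^H)} = H$.
   Context: For a group $L$ acting linearly on a space $Y$, a subgroup $M \le L$ and a subspace $X \subseteq Y$: $Y^M = \{y \in Y : my = y \ \forall m \in M\}$ and $L_{(X)} = \{l \in L : lx = x \ \forall x \in X\}$. With $G/K = \{g_1K, \dots, g_sK\}$, $g_1 = e$, the induced representation $\mathrm{Ind}_K^G(U)$ is $\bigoplus_i g_iU$ with action $g\cdot \sum_i g_iu_i = \sum_i g_{\tau(i,g)}(k_{i,g}u_i)$ where $gg_i = g_{\tau(i,g)}k_{i,g}$, $k_{i,g} \in K$. *)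

theory Defs
  imports "HOL-Algebra.Algebra" "HOL-Library.Function_Algebras"
begin

definition is_rep ::
  "('g, 'b) monoid_scheme \<Rightarrow> (complex \<Rightarrow> 'v::ab_group_add \<Rightarrow> 'v) \<Rightarrow> 'v set \<Rightarrow> ('g \<Rightarrow> 'v \<Rightarrow> 'v) \<Rightarrow> bool"
  where "is_rep G sc Sp rho \<longleftrightarrow>
    group G \<and> vector_space sc \<and> Modules.module.subspace sc Sp \<and>
    (\<forall>g\<in>carrier G. \<forall>x\<in>Sp. rho g x \<in> Sp) \<and>
    (\<forall>g\<in>carrier G. \<forall>x\<in>Sp. \<forall>y\<in>Sp. rho g (x + y) = rho g x + rho g y) \<and>
    (\<forall>g\<in>carrier G. \<forall>c. \<forall>x\<in>Sp. rho g (sc c x) = sc c (rho g x)) \<and>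
    (\<forall>x\<in>Sp. rho (one G) x = x) \<and>
    (\<forall>g\<in>carrier G. \<forall>h\<in>carrier G. \<forall>x\<in>Sp. rho (monoid.mult G g h) x = rho g (rho h x))"

definition is_subrep ::
  "('g, 'b) monoid_scheme \<Rightarrow> (complex \<Rightarrow> 'v::ab_group_add \<Rightarrow> 'v) \<Rightarrow> 'v set \<Rightarrow> ('g \<Rightarrow> 'v \<Rightarrow> 'v) \<Rightarrow> 'v set \<Rightarrow> bool"
  where "is_subrep G sc Sp rho Y \<longleftrightarrow>
    Modules.module.subspace sc Y \<and> Y \<subseteq> Sp \<and> (\<forall>g\<in>carrier G. \<forall>y\<in>Y. rho g y \<in> Y)"

definition irreducible_rep ::
  "('g, 'b) monoid_scheme \<Rightarrow> (complex \<Rightarrow> 'v::ab_group_add \<Rightarrow> 'v) \<Rightarrow> 'v set \<Rightarrow> ('g \<Rightarrow> 'v \<Rightarrow> 'v) \<Rightarrow> bool"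
  where "irreducible_rep G sc Sp rho \<longleftrightarrow>
    is_rep G sc Sp rho \<and> Sp \<noteq> {0} \<and>
    (\<forall>Y. is_subrep G sc Sp rho Y \<longrightarrow> Y = {0} \<or> Y = Sp)"

definition fixed_vecs :: "'g set \<Rightarrow> ('g \<Rightarrow> 'v \<Rightarrow> 'v) \<Rightarrow> 'v set \<Rightarrow> 'v set"
  where "fixed_vecs M rho Y = {y \<in> Y. \<forall>m\<in>M. rho m y = y}"

definition pt_stab :: "'g set \<Rightarrow> ('g \<Rightarrow> 'v \<Rightarrow> 'v) \<Rightarrow> 'v set \<Rightarrow> 'g set"
  where "pt_stab L rho Sp = {l \<in> L. \<forall>x\<in>Sp. rho l x = x}"

definition left_transversal :: "('g, 'b) monoid_scheme \<Rightarrow> 'g set \<Rightarrow> 'g set \<Rightarrow> bool"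
  where "left_transversal G K R \<longleftrightarrow> R \<subseteq> carrier G \<and> (one G) \<in> R \<and>
    (\<forall>g\<in>carrier G. \<exists>!r. r \<in> R \<and> g \<in> l_coset G r K)"

text \<open>Induced representation Ind_K^G(U) = (direct sum over r in R of r U), modelled as
  functions w : 'g \<Rightarrow> 'u vanishing outside R (w r is the component in r U).\<close>
definition ind_space :: "'g set \<Rightarrow> ('g \<Rightarrow> 'u::zero) set"
  where "ind_space R = {w. \<forall>x. x \<notin> R \<longrightarrow> w x = 0}"

definition ind_scale :: "(complex \<Rightarrow> 'u \<Rightarrow> 'u) \<Rightarrow> complex \<Rightarrow> ('g \<Rightarrow> 'u) \<Rightarrow> ('g \<Rightarrow> 'u)"
  where "ind_scale sc c w = (\<lambda>x. sc c (w x))"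

text \<open>g \<cdot> (sum_i g_i u_i) = sum_i g_tau(i,g) (k_(i,g) u_i) with g g_i = g_tau(i,g) k_(i,g):
  the component at r' comes from the unique r in R with g r \<in> r' K, and k = r'^-1 g r.\<close>
definition ind_action ::
  "('g, 'b) monoid_scheme \<Rightarrow> 'g set \<Rightarrow> 'g set \<Rightarrow> ('g \<Rightarrow> 'u \<Rightarrow> 'u) \<Rightarrow> 'g \<Rightarrow> ('g \<Rightarrow> 'u::zero) \<Rightarrow> ('g \<Rightarrow> 'u)"
  where "ind_action G K R rho g w = (\<lambda>r'. if r' \<in> R then
      (let r = (THE r. r \<in> R \<and> monoid.mult G g r \<in> l_coset G r' K)
       in rho (monoid.mult G (monoid.mult G (m_inv G r') g) r) (w r))
    else 0)"

end

theory Submission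
  imports Defs
begin

text \<open>For \<open>u \<in> U^H\<close> the vector \<open>e u\<close> is \<open>H\<close>-fixed, and \<open>g (e u)\<close> lies in the summand of
  the coset \<open>g K\<close>; so an element of \<open>G\<close> fixing \<open>W^H\<close> pointwise lies in \<open>K\<close> and fixes \<open>U^H\<close>.
  Evaluation at the trivial coset is a \<open>K\<close>-map \<open>V \<rightarrow> U\<close> with nonzero image, hence onto by
  irreducibility of \<open>U\<close>. Averaging over \<open>H\<close> a preimage of \<open>u \<in> U^H\<close> gives a vector of \<open>V^H\<close>
  whose trivial component is \<open>|H| u\<close>, which yields \<open>V^H \<noteq> 0\<close> and \<open>K\<^sub>(\<^sub>V\<^sup>H\<^sub>) \<subseteq> K\<^sub>(\<^sub>U\<^sup>H\<^sub>)\<close>.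
  The third claim follows because \<open>H\<close> fixes both \<open>W^H\<close> and \<open>V^H\<close> pointwise.\<close>

lemma (in group) l_coset_mem_iff:
  assumes "subgroup K G" "x \<in> carrier G" "r \<in> carrier G"
  shows "x \<in> r <# K \<longleftrightarrow> inv r \<otimes> x \<in> K"
  using subgroup.lcos_module_imp[OF assms(1) is_group assms(3)]
    subgroup.lcos_module_rev[OF assms(1) is_group assms(3,2)] by blast

lemma (in group) mult_inv_cancel_left:
  "x \<in> carrier G \<Longrightarrow> y \<in> carrier G \<Longrightarrow> x \<otimes> (inv x \<otimes> y) = y"
  and inv_mult_cancel_left:
  "x \<in> carrier G \<Longrightarrow> y \<in> carrier G \<Longrightarrow> inv x \<otimes> (x \<otimes> y) = y"
  by (simp_all add: m_assoc [symmetric])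

lemma sum_fun_apply: "(sum f A) x = (\<Sum>a\<in>A. f a x)"
  by (induction A rule: infinite_finite_induct) auto

lemma is_rep_module: "is_rep G sc Sp rho \<Longrightarrow> Modules.module sc"
  unfolding is_rep_def by (simp add: module_iff_vector_space)

lemma is_rep_subspace: "is_rep G sc Sp rho \<Longrightarrow> module.subspace sc Sp"
  unfolding is_rep_def by simp

lemma
  assumes "is_rep G sc Sp rho"
  shows is_rep_closed: "\<And>g x. g \<in> carrier G \<Longrightarrow> x \<in> Sp \<Longrightarrow> rho g x \<in> Sp"
    and is_rep_add: "\<And>g x y. g \<in> carrier G \<Longrightarrow> x \<in> Sp \<Longrightarrow> y \<in> Sp \<Longrightarrow> rho g (x + y) = rho g x + rho g y"
    and is_rep_scale: "\<And>g c x. g \<in> carrier G \<Longrightarrow> x \<in> Sp \<Longrightarrow> rho g (sc c x) = sc c (rho g x)"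
    and is_rep_one: "\<And>x. x \<in> Sp \<Longrightarrow> rho \<one>\<^bsub>G\<^esub> x = x"
    and is_rep_mult: "\<And>g h x. g \<in> carrier G \<Longrightarrow> h \<in> carrier G \<Longrightarrow> x \<in> Sp \<Longrightarrow>
      rho (g \<otimes>\<^bsub>G\<^esub> h) x = rho g (rho h x)"
  using assms unfolding is_rep_def by simp_all

lemma is_rep_zero_mem: "is_rep G sc Sp rho \<Longrightarrow> 0 \<in> Sp"
  using module.subspace_0[OF is_rep_module is_rep_subspace] by blast

lemma is_rep_zero:
  assumes "is_rep G sc Sp rho" "g \<in> carrier G"
  shows "rho g 0 = 0"
  using is_rep_add[OF assms, of 0 0] is_rep_zero_mem[OF assms(1)] by simp

lemma is_rep_eq_0_iff:
  assumes rep: "is_rep G sc Sp rho" and g: "g \<in> carrier G" and x: "x \<in> Sp"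
  shows "rho g x = 0 \<longleftrightarrow> x = 0"
proof
  have grp: "group G" using rep unfolding is_rep_def by simp
  then have ginv: "inv\<^bsub>G\<^esub> g \<in> carrier G" "inv\<^bsub>G\<^esub> g \<otimes>\<^bsub>G\<^esub> g = \<one>\<^bsub>G\<^esub>"
    using g by (simp_all add: group.l_inv)
  assume "rho g x = 0"
  have "x = rho (inv\<^bsub>G\<^esub> g \<otimes>\<^bsub>G\<^esub> g) x" unfolding ginv(2) using is_rep_one[OF rep x] by simp
  also have "\<dots> = rho (inv\<^bsub>G\<^esub> g) (rho g x)" by (rule is_rep_mult[OF rep ginv(1) g x])
  also have "\<dots> = 0" using is_rep_zero[OF rep ginv(1)] \<open>rho g x = 0\<close> by simp
  finally show "x = 0" .
next
  assume "x = 0"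
  then show "rho g x = 0" using is_rep_zero[OF rep g] by simp
qed

lemma is_rep_sum:
  assumes rep: "is_rep G sc Sp rho" and g: "g \<in> carrier G"
    and f: "\<And>a. a \<in> A \<Longrightarrow> f a \<in> Sp"
  shows "rho g (sum f A) = (\<Sum>a\<in>A. rho g (f a))"
  using f
proof (induction A rule: infinite_finite_induct)
  case (insert a A)
  have "sum f A \<in> Sp"
    by (intro module.subspace_sum[OF is_rep_module[OF rep] is_rep_subspace[OF rep]] insert.prems) simp
  then show ?case using is_rep_add[OF rep g] insert by simp
qed (simp_all add: is_rep_zero[OF rep g])

text \<open>No finiteness of \<open>H\<close> is needed: over an infinite \<open>H\<close> the sum is \<open>0\<close>.\<close>
lemma is_rep_orbit_sum_fixed:
  assumes rep: "is_rep G sc Sp rho" and H: "subgroup H G" and x: "x \<in> Sp"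
  shows "(\<Sum>h\<in>H. rho h x) \<in> fixed_vecs H rho Sp"
proof -
  interpret group G using rep unfolding is_rep_def by simp
  have HG: "H \<subseteq> carrier G" using subgroup.subset[OF H] .
  have orbit: "rho h x \<in> Sp" if "h \<in> H" for h using is_rep_closed[OF rep _ x] that HG by blast
  have "rho h0 (\<Sum>h\<in>H. rho h x) = (\<Sum>h\<in>H. rho h x)" if h0: "h0 \<in> H" for h0
  proof -
    have h0G: "h0 \<in> carrier G" using h0 HG by blast
    have "rho h0 (\<Sum>h\<in>H. rho h x) = (\<Sum>h\<in>H. rho h0 (rho h x))"
      by (rule is_rep_sum[OF rep h0G orbit])
    also have "\<dots> = (\<Sum>h\<in>H. rho (h0 \<otimes>\<^bsub>G\<^esub> h) x)"
      using is_rep_mult[OF rep h0G _ x] HG by (intro sum.cong) auto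
    also have "\<dots> = (\<Sum>h\<in>(\<lambda>h. h0 \<otimes>\<^bsub>G\<^esub> h) ` H. rho h x)"
      using inj_on_subset[OF inj_on_cmult[OF h0G] HG] by (simp add: sum.reindex)
    also have "(\<lambda>h. h0 \<otimes>\<^bsub>G\<^esub> h) ` H = H"
      using coset_join3[OF h0G H h0] unfolding l_coset_def by auto
    finally show ?thesis .
  qed
  moreover have "(\<Sum>h\<in>H. rho h x) \<in> Sp"
    by (intro module.subspace_sum[OF is_rep_module[OF rep] is_rep_subspace[OF rep]] orbit)
  ultimately show ?thesis unfolding fixed_vecs_def by blast
qed

locale induced_rep = group G for G :: "('g, 'b) monoid_scheme" (structure) +
  fixes K R :: "'g set" and sc :: "complex \<Rightarrow> 'u::ab_group_add \<Rightarrow> 'u" and rho :: "'g \<Rightarrow> 'u \<Rightarrow> 'u"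
  assumes subgroup_K: "subgroup K G" and transversal: "left_transversal G K R"
    and rep_K: "is_rep (G\<lparr>carrier := K\<rparr>) sc UNIV rho"
begin

abbreviation ind_act :: "'g \<Rightarrow> ('g \<Rightarrow> 'u) \<Rightarrow> 'g \<Rightarrow> 'u"
  where "ind_act \<equiv> ind_action G K R rho"

lemma K_subset: "K \<subseteq> carrier G"
  using subgroup.subset[OF subgroup_K] .

lemma transversal_subset: "R \<subseteq> carrier G"
  and one_in_transversal: "\<one> \<in> R"
  and transversal_unique: "g \<in> carrier G \<Longrightarrow> \<exists>!r. r \<in> R \<and> g \<in> r <# K"
  using transversal unfolding left_transversal_def by auto

lemma rho_one: "rho \<one> x = x"
  using is_rep_one[OF rep_K] by simp

lemma rho_zero: "k \<in> K \<Longrightarrow> rho k 0 = 0"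
  using is_rep_zero[OF rep_K] by simp

lemma rho_scale: "k \<in> K \<Longrightarrow> rho k (sc c x) = sc c (rho k x)"
  using is_rep_scale[OF rep_K] by simp

lemma rho_eq_0_iff: "k \<in> K \<Longrightarrow> rho k x = 0 \<longleftrightarrow> x = 0"
  using is_rep_eq_0_iff[OF rep_K] by simp

lemma transversal_eq:
  assumes "r1 \<in> R" "r2 \<in> R" "inv r1 \<otimes> r2 \<in> K"
  shows "r1 = r2"
proof -
  have G: "r1 \<in> carrier G" "r2 \<in> carrier G" using assms transversal_subset by auto
  have "r2 \<in> r2 <# K" "r2 \<in> r1 <# K"
    using l_coset_mem_iff[OF subgroup_K] G assms(3) subgroup.one_closed[OF subgroup_K] by auto
  then show ?thesis using transversal_unique[OF G(2)] assms by blast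
qed

lemma transversal_component_unique:
  assumes "g \<in> carrier G" "r' \<in> R" "r1 \<in> R" "r2 \<in> R"
    and "inv r' \<otimes> g \<otimes> r1 \<in> K" "inv r' \<otimes> g \<otimes> r2 \<in> K"
  shows "r1 = r2"
proof -
  have G: "r' \<in> carrier G" "r1 \<in> carrier G" "r2 \<in> carrier G" using assms transversal_subset by auto
  have "inv (inv r' \<otimes> g \<otimes> r1) \<otimes> (inv r' \<otimes> g \<otimes> r2) \<in> K"
    using assms(5,6) subgroup.m_closed[OF subgroup_K] subgroup.m_inv_closed[OF subgroup_K] by blast
  also have "inv (inv r' \<otimes> g \<otimes> r1) \<otimes> (inv r' \<otimes> g \<otimes> r2) = inv r1 \<otimes> r2"
    using G assms(1) by (simp add: inv_mult_group m_assoc mult_inv_cancel_left inv_mult_cancel_left)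
  finally show ?thesis using transversal_eq assms(3,4) by blast
qed

lemma transversal_component_exists:
  assumes g: "g \<in> carrier G" and r': "r' \<in> R"
  shows "\<exists>r\<in>R. inv r' \<otimes> g \<otimes> r \<in> K"
proof -
  have r'G: "r' \<in> carrier G" using r' transversal_subset by auto
  then have x: "inv g \<otimes> r' \<in> carrier G" using g by simp
  then obtain r where r: "r \<in> R" "inv g \<otimes> r' \<in> r <# K" using transversal_unique by blast
  have rG: "r \<in> carrier G" using r transversal_subset by auto
  have "inv (inv r \<otimes> (inv g \<otimes> r')) \<in> K"
    using r(2) l_coset_mem_iff[OF subgroup_K x rG] subgroup.m_inv_closed[OF subgroup_K] by blast
  also have "inv (inv r \<otimes> (inv g \<otimes> r')) = inv r' \<otimes> g \<otimes> r"
    using rG r'G g by (simp add: inv_mult_group m_assoc)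
  finally show ?thesis using r(1) by blast
qed

lemma ind_action_eq:
  assumes g: "g \<in> carrier G" and R: "r' \<in> R" "r \<in> R" and k: "inv r' \<otimes> g \<otimes> r \<in> K"
  shows "ind_act g w r' = rho (inv r' \<otimes> g \<otimes> r) (w r)"
proof -
  have in_coset: "g \<otimes> r2 \<in> r' <# K \<longleftrightarrow> inv r' \<otimes> g \<otimes> r2 \<in> K" if "r2 \<in> R" for r2
  proof -
    have "r' \<in> carrier G" "r2 \<in> carrier G" using that R transversal_subset by auto
    then show ?thesis using l_coset_mem_iff[OF subgroup_K, of "g \<otimes> r2" r'] g by (simp add: m_assoc)
  qed
  have "(THE r. r \<in> R \<and> g \<otimes> r \<in> r' <# K) = r"
  proof (rule the_equality)
    show "r \<in> R \<and> g \<otimes> r \<in> r' <# K" using in_coset R(2) k by blast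
    show "r2 = r" if "r2 \<in> R \<and> g \<otimes> r2 \<in> r' <# K" for r2
      using transversal_component_unique[OF g R(1) R(2)] in_coset that k by blast
  qed
  then show ?thesis using R unfolding ind_action_def by simp
qed

lemma ind_action_at_one:
  assumes k: "k \<in> K"
  shows "ind_act k w \<one> = rho k (w \<one>)"
proof -
  have "k \<in> carrier G" using k K_subset by blast
  then show ?thesis using ind_action_eq[OF _ one_in_transversal one_in_transversal, of k] k by simp
qed

lemma ind_action_inv_at_one:
  assumes "r \<in> R"
  shows "ind_act (inv r) w \<one> = w r"
proof -
  have "r \<in> carrier G" using assms transversal_subset by auto
  then show ?thesis
    using ind_action_eq[OF _ one_in_transversal assms, of "inv r"] subgroup.one_closed[OF subgroup_K]
    by (simp add: rho_one)
qed

definition ind_embed :: "'u \<Rightarrow> 'g \<Rightarrow> 'u"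
  where "ind_embed u = (\<lambda>x. if x = \<one> then u else 0)"

lemma ind_embed_in_space: "ind_embed u \<in> ind_space R"
  using one_in_transversal unfolding ind_embed_def ind_space_def by auto

lemma ind_action_embed:
  assumes g: "g \<in> carrier G" and r': "r' \<in> R"
  shows "ind_act g (ind_embed u) r' = (if inv r' \<otimes> g \<in> K then rho (inv r' \<otimes> g) u else 0)"
proof -
  have r'G: "r' \<in> carrier G" using r' transversal_subset by auto
  obtain r where r: "r \<in> R" "inv r' \<otimes> g \<otimes> r \<in> K"
    using transversal_component_exists[OF g r'] by blast
  have "r = \<one> \<longleftrightarrow> inv r' \<otimes> g \<in> K"
    using transversal_component_unique[OF g r' r(1) one_in_transversal r(2)] r r'G g by auto
  then show ?thesis
    using ind_action_eq[OF g r' r] r rho_zero r'G g by (auto simp: ind_embed_def)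
qed

lemma ind_action_embed_subgroup:
  assumes k: "k \<in> K"
  shows "ind_act k (ind_embed u) = ind_embed (rho k u)"
proof
  fix x
  have kG: "k \<in> carrier G" using k K_subset by auto
  show "ind_act k (ind_embed u) x = ind_embed (rho k u) x"
  proof (cases "x \<in> R")
    case True
    then have xG: "x \<in> carrier G" using transversal_subset by auto
    have "inv x \<otimes> k \<in> K \<longleftrightarrow> inv x \<otimes> \<one> \<in> K"
      using xG kG k subgroup.m_closed[OF subgroup_K] subgroup.m_inv_closed[OF subgroup_K]
      by (metis m_assoc r_inv inv_closed r_one)
    also have "\<dots> \<longleftrightarrow> x = \<one>"
      using transversal_eq[OF True one_in_transversal] xG subgroup.one_closed[OF subgroup_K] by auto
    finally show ?thesis using ind_action_embed[OF kG True] kG by (auto simp: ind_embed_def)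
  next
    case False
    then show ?thesis using one_in_transversal unfolding ind_action_def ind_embed_def by auto
  qed
qed

lemma ind_embed_fixed:
  assumes "H \<subseteq> K" "u \<in> fixed_vecs H rho UNIV"
  shows "ind_embed u \<in> fixed_vecs H ind_act (ind_space R)"
  using assms ind_action_embed_subgroup ind_embed_in_space unfolding fixed_vecs_def by auto

lemma pt_stab_fixed_ind_space_subset:
  assumes HK: "H \<subseteq> K" and UH: "fixed_vecs H rho UNIV \<noteq> {0}"
  shows "pt_stab (carrier G) ind_act (fixed_vecs H ind_act (ind_space R))
    \<subseteq> pt_stab K rho (fixed_vecs H rho UNIV)"
proof
  fix g assume "g \<in> pt_stab (carrier G) ind_act (fixed_vecs H ind_act (ind_space R))"
  then have g: "g \<in> carrier G"
    and fixes_embed: "\<And>u. u \<in> fixed_vecs H rho UNIV \<Longrightarrow> ind_act g (ind_embed u) = ind_embed u"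
    using ind_embed_fixed[OF HK] unfolding pt_stab_def by auto
  obtain u0 where u0: "u0 \<in> fixed_vecs H rho UNIV" "u0 \<noteq> 0"
    using UH HK rho_zero unfolding fixed_vecs_def by blast
  obtain r' where r': "r' \<in> R" "g \<in> r' <# K" using transversal_unique[OF g] by blast
  have k: "inv r' \<otimes> g \<in> K"
    using r' l_coset_mem_iff[OF subgroup_K g] transversal_subset by blast
  have "ind_embed u0 r' = ind_act g (ind_embed u0) r'" using fixes_embed[OF u0(1)] by simp
  also have "\<dots> = rho (inv r' \<otimes> g) u0" using ind_action_embed[OF g r'(1)] k by simp
  finally have "ind_embed u0 r' \<noteq> 0" using rho_eq_0_iff[OF k] u0(2) by simp
  then have "r' = \<one>" unfolding ind_embed_def by (simp split: if_splits)
  then have gK: "g \<in> K" using k g by simp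
  have "rho g u = u" if "u \<in> fixed_vecs H rho UNIV" for u
  proof -
    have "ind_embed (rho g u) \<one> = ind_embed u \<one>"
      using fixes_embed[OF that] ind_action_embed_subgroup[OF gK] by simp
    then show ?thesis unfolding ind_embed_def by simp
  qed
  then show "g \<in> pt_stab K rho (fixed_vecs H rho UNIV)" using gK unfolding pt_stab_def by blast
qed

lemma scale_of_nat_eq_0_iff: "n \<noteq> 0 \<Longrightarrow> sc (of_nat n) u = 0 \<longleftrightarrow> u = 0"
  using vector_space.scale_eq_0_iff[of sc] is_rep_module[OF rep_K]
  by (simp add: module_iff_vector_space)

context
  fixes V :: "('g \<Rightarrow> 'u) set"
  assumes rep_V: "is_rep G (ind_scale sc) V ind_act"
    and V_subset: "V \<subseteq> ind_space R" and V_nonzero: "V \<noteq> {0}"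
begin

lemma eval_one_subrep: "is_subrep (G\<lparr>carrier := K\<rparr>) sc UNIV rho ((\<lambda>v. v \<one>) ` V)"
proof -
  have "module.subspace sc ((\<lambda>v. v \<one>) ` V)"
  proof (rule module.subspaceI[OF is_rep_module[OF rep_K]])
    show "0 \<in> (\<lambda>v. v \<one>) ` V" using image_eqI[of 0 "\<lambda>v. v \<one>" 0] is_rep_zero_mem[OF rep_V] by simp
  next
    fix x y assume "x \<in> (\<lambda>v. v \<one>) ` V" "y \<in> (\<lambda>v. v \<one>) ` V"
    then obtain v w where "v \<in> V" "w \<in> V" "x = v \<one>" "y = w \<one>" by blast
    then show "x + y \<in> (\<lambda>v. v \<one>) ` V"
      using module.subspace_add[OF is_rep_module[OF rep_V] is_rep_subspace[OF rep_V], of v w]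
        image_eqI[of "x + y" "\<lambda>v. v \<one>" "v + w"] by simp
  next
    fix c x assume "x \<in> (\<lambda>v. v \<one>) ` V"
    then obtain v where "v \<in> V" "x = v \<one>" by blast
    then show "sc c x \<in> (\<lambda>v. v \<one>) ` V"
      using module.subspace_scale[OF is_rep_module[OF rep_V] is_rep_subspace[OF rep_V], of v c]
        image_eqI[of "sc c x" "\<lambda>v. v \<one>" "ind_scale sc c v"] by (simp add: ind_scale_def)
  qed
  moreover have "rho k (v \<one>) \<in> (\<lambda>v. v \<one>) ` V" if "k \<in> K" "v \<in> V" for k v
  proof -
    have "ind_act k v \<in> V" using is_rep_closed[OF rep_V _ that(2)] that(1) K_subset by blast
    then show ?thesis using ind_action_at_one[OF that(1)] image_eqI[of "rho k (v \<one>)"] by metis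
  qed
  ultimately show ?thesis unfolding is_subrep_def by auto
qed

text \<open>Every nonzero \<open>v\<close> has a nonzero component \<open>v r\<close>, which \<open>r\<^sup>-\<^sup>1\<close> moves to the trivial coset.\<close>
lemma eval_one_image_nonzero: "(\<lambda>v. v \<one>) ` V \<noteq> {0}"
proof
  assume image0: "(\<lambda>v. v \<one>) ` V = {0}"
  obtain v where v: "v \<in> V" "v \<noteq> 0" using V_nonzero is_rep_zero_mem[OF rep_V] by blast
  then obtain r where r: "v r \<noteq> 0" by (auto simp: fun_eq_iff)
  have rR: "r \<in> R" using r v(1) V_subset unfolding ind_space_def by blast
  then have "ind_act (inv r) v \<in> V"
    using is_rep_closed[OF rep_V _ v(1)] transversal_subset by blast
  then have "ind_act (inv r) v \<one> \<in> (\<lambda>v. v \<one>) ` V" by (rule imageI)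
  then show False using image0 ind_action_inv_at_one[OF rR] r by simp
qed

lemma eval_one_surj:
  assumes "irreducible_rep (G\<lparr>carrier := K\<rparr>) sc UNIV rho"
  shows "(\<lambda>v. v \<one>) ` V = UNIV"
  using assms eval_one_subrep eval_one_image_nonzero unfolding irreducible_rep_def by blast

lemma orbit_sum_at_one:
  assumes "H \<subseteq> K" "u \<in> fixed_vecs H rho UNIV" "v \<one> = u"
  shows "(\<Sum>h\<in>H. ind_act h v) \<one> = sc (of_nat (card H)) u"
proof -
  have "(\<Sum>h\<in>H. ind_act h v) \<one> = (\<Sum>h\<in>H. u)"
    unfolding sum_fun_apply
  proof (rule sum.cong)
    show "ind_act h v \<one> = u" if "h \<in> H" for h
      using that assms ind_action_at_one[of h v] unfolding fixed_vecs_def by auto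
  qed simp
  also have "\<dots> = sc (of_nat (card H)) u"
    by (rule module.sum_constant_scale[OF is_rep_module[OF rep_K]])
  finally show ?thesis .
qed

lemma fixed_lift_exists:
  assumes U_irr: "irreducible_rep (G\<lparr>carrier := K\<rparr>) sc UNIV rho"
    and H: "subgroup H G" "H \<subseteq> K" and u: "u \<in> fixed_vecs H rho UNIV"
  shows "\<exists>w\<in>fixed_vecs H ind_act V. w \<one> = sc (of_nat (card H)) u"
proof -
  obtain v where "v \<in> V" "v \<one> = u" using eval_one_surj[OF U_irr] by (metis UNIV_I imageE)
  then show ?thesis
    using is_rep_orbit_sum_fixed[OF rep_V H(1)] orbit_sum_at_one[OF H(2) u] by blast
qed

context
  fixes H :: "'g set"
  assumes U_irr: "irreducible_rep (G\<lparr>carrier := K\<rparr>) sc UNIV rho"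
    and H: "subgroup H G" "H \<subseteq> K" and finite_G: "finite (carrier G)"
begin

lemma scale_card_eq_0_iff: "sc (of_nat (card H)) u = 0 \<longleftrightarrow> u = 0"
  using scale_of_nat_eq_0_iff subgroup.finite_imp_card_positive[OF H(1) finite_G] by simp

lemma fixed_vecs_subrep_nonzero:
  assumes "fixed_vecs H rho UNIV \<noteq> {0}"
  shows "fixed_vecs H ind_act V \<noteq> {0}"
proof -
  obtain u where u: "u \<in> fixed_vecs H rho UNIV" "u \<noteq> 0"
    using assms H(2) rho_zero unfolding fixed_vecs_def by blast
  obtain w where "w \<in> fixed_vecs H ind_act V" "w \<one> = sc (of_nat (card H)) u"
    using fixed_lift_exists[OF U_irr H u(1)] by blast
  then show ?thesis using scale_card_eq_0_iff u(2) by auto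
qed

lemma pt_stab_fixed_subrep_subset:
  "pt_stab K ind_act (fixed_vecs H ind_act V) \<subseteq> pt_stab K rho (fixed_vecs H rho UNIV)"
proof
  fix k assume "k \<in> pt_stab K ind_act (fixed_vecs H ind_act V)"
  then have k: "k \<in> K" and stab: "\<And>w. w \<in> fixed_vecs H ind_act V \<Longrightarrow> ind_act k w = w"
    unfolding pt_stab_def by auto
  have "rho k u = u" if u: "u \<in> fixed_vecs H rho UNIV" for u
  proof -
    obtain w where w: "w \<in> fixed_vecs H ind_act V" "w \<one> = sc (of_nat (card H)) u"
      using fixed_lift_exists[OF U_irr H u] by blast
    have "sc (of_nat (card H)) (rho k u) = ind_act k w \<one>"
      using ind_action_at_one[OF k] rho_scale[OF k] w(2) by simp
    also have "\<dots> = sc (of_nat (card H)) u" using stab[OF w(1)] w(2) by simp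
    finally have "sc (of_nat (card H)) (rho k u - u) = 0"
      using module.scale_right_diff_distrib[OF is_rep_module[OF rep_K]] by simp
    then show ?thesis using scale_card_eq_0_iff by simp
  qed
  then show "k \<in> pt_stab K rho (fixed_vecs H rho UNIV)" using k unfolding pt_stab_def by blast
qed

end

end

end

theorem lemma3p8:
  fixes G :: "('g, 'b) monoid_scheme"
    and K H R :: "'g set"
    and sc :: "complex \<Rightarrow> 'u::ab_group_add \<Rightarrow> 'u"
    and rho :: "'g \<Rightarrow> 'u \<Rightarrow> 'u"
    and V :: "('g \<Rightarrow> 'u) set"
  assumes "group G" and "finite (carrier G)"
    and "subgroup K G" and "subgroup H G" and "H \<subseteq> K"
    and U_irr: "irreducible_rep (G\<lparr>carrier := K\<rparr>) sc UNIV rho"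
    and UH: "fixed_vecs H rho UNIV \<noteq> {0}"
    and R: "left_transversal G K R"
    and V_sub: "is_subrep G (ind_scale sc) (ind_space R) (ind_action G K R rho) V"
    and V_irr: "irreducible_rep G (ind_scale sc) V (ind_action G K R rho)"
  shows "(pt_stab (carrier G) (ind_action G K R rho)
            (fixed_vecs H (ind_action G K R rho) (ind_space R))
           \<subseteq> pt_stab K rho (fixed_vecs H rho UNIV))
    \<and> (fixed_vecs H (ind_action G K R rho) V \<noteq> {0}
    \<and> pt_stab K (ind_action G K R rho) (fixed_vecs H (ind_action G K R rho) V)
           \<subseteq> pt_stab K rho (fixed_vecs H rho UNIV))
    \<and> (pt_stab K rho (fixed_vecs H rho UNIV) = H \<longrightarrow>
           pt_stab (carrier G) (ind_action G K R rho)
             (fixed_vecs H (ind_action G K R rho) (ind_space R)) = H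
         \<and> pt_stab K (ind_action G K R rho) (fixed_vecs H (ind_action G K R rho) V) = H)"
proof -
  interpret induced_rep G K R sc rho
    using assms(1,3) R U_irr unfolding irreducible_rep_def
    by (intro induced_rep.intro induced_rep_axioms.intro) simp_all
  have HG: "H \<subseteq> carrier G" using subgroup.subset[OF \<open>subgroup H G\<close>] .
  have V: "is_rep G (ind_scale sc) V ind_act" "V \<subseteq> ind_space R" "V \<noteq> {0}"
    using V_sub V_irr unfolding is_subrep_def irreducible_rep_def by simp_all
  note H = U_irr \<open>subgroup H G\<close> \<open>H \<subseteq> K\<close> \<open>finite (carrier G)\<close>
  have "H \<subseteq> pt_stab (carrier G) ind_act (fixed_vecs H ind_act (ind_space R))"
    "H \<subseteq> pt_stab K ind_act (fixed_vecs H ind_act V)"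
    using HG \<open>H \<subseteq> K\<close> unfolding pt_stab_def fixed_vecs_def by auto
  then show ?thesis
    using pt_stab_fixed_ind_space_subset[OF \<open>H \<subseteq> K\<close> UH]
      fixed_vecs_subrep_nonzero[OF V H UH] pt_stab_fixed_subrep_subset[OF V H]
    by blast
qed

end
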